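(* Let $d\ge 1$ and $k\in\{1,2\}$. The domain $\mathfrak{D}(\mathcal{A}_k)$ of the arcsine transformation $\mathcal{A}_k$ equals $\mathfrak{M}_L^k(\mathbb{R}^d)$.
   Context: A Lévy measure on $\mathbb{R}^d$ is a measure $\nu$ with $\nu(\{0\})=0$ and $\int_{\mathbb{R}^d}(1\wedge|x|^2)\nu(\mathrm{d}x)<\infty$; their class is $\mathfrak{M}_L(\mathbb{R}^d)=\mathfrak{M}_L^2(\mathbb{R}^d)$, and $\mathfrak{M}_L^1(\mathbb{R}^d)$ is the class of Lévy measures with $\int(1\wedge|x|)\nu(\mathrm{d}x)<\infty$. For $s>0$ set $a_1(r;s)=2\pi^{-1}(s-r^2)^{-1/2}$ for $0<r<s^{1/2}$ and $0$ otherwise; $a_2(r;s)=2\pi^{-1}(s^2-r^2)^{-1/2}$ for $0<r<s$ and $0$ otherwise. For a measure $\nu$ on $\mathbb{R}^d$ with $\nu(\{0\})=0$ and $k=1,2$, define $\mathcal{A}_k(\nu)(B)=\int_{\mathbb{R}^d\setminus\{0\}}\nu(\mathrm{d}x)\int_0^\infty a_k(r;|x|)1_B(r x/|x|)\,\mathrm{d}r$ for Borel $B\subset\mathbb{R}^d$. The domain $\mathfrak{D}(\mathcal{A}_k)$ is the class of measures $\nu$ on $\mathbb{R}^d$ with $\nu(\{0\})=0$ such that $\mathcal{A}_k(\nu)$ is a Lévy measure in $\mathfrak{M}_L(\mathbb{R}^d)$. *)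

theory Defs
  imports "HOL-Analysis.Analysis"
begin

text \<open>Measures on R^d are modelled as measures on a Euclidean space 'a
  (dimension DIM('a) >= 1) whose measurable sets are the Borel sets.\<close>

definition borel_measure_on :: "'a::euclidean_space measure \<Rightarrow> bool" where
  "borel_measure_on nu \<longleftrightarrow> sets nu = sets borel"

definition levy_measure :: "'a::euclidean_space measure \<Rightarrow> bool" where
  "levy_measure nu \<longleftrightarrow> borel_measure_on nu \<and> emeasure nu {0} = 0 \<and>
     (\<integral>\<^sup>+ x. ennreal (min 1 (norm x ^ 2)) \<partial>nu) < \<infinity>"

definition levy_class :: "nat \<Rightarrow> 'a::euclidean_space measure set" where
  "levy_class k = {nu. levy_measure nu \<and>
     (\<integral>\<^sup>+ x. ennreal (min 1 (norm x ^ k)) \<partial>nu) < \<infinity>}"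

definition arcsine_kernel :: "nat \<Rightarrow> real \<Rightarrow> real \<Rightarrow> real" where
  "arcsine_kernel k r s =
     (if k = 1 then (if 0 < r \<and> r < sqrt s then 2 / pi * (s - r\<^sup>2) powr (-1/2) else 0)
      else (if 0 < r \<and> r < s then 2 / pi * (s\<^sup>2 - r\<^sup>2) powr (-1/2) else 0))"

definition arcsine_transform :: "nat \<Rightarrow> 'a::euclidean_space measure \<Rightarrow> 'a measure" where
  "arcsine_transform k nu = measure_of UNIV (sets borel)
     (\<lambda>B. \<integral>\<^sup>+ x. indicator (UNIV - {0}) x *
        (\<integral>\<^sup>+ r. indicator {0<..} r * ennreal (arcsine_kernel k r (norm x))
              * indicator B (r *\<^sub>R (x /\<^sub>R norm x)) \<partial>lborel) \<partial>nu)"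

definition arcsine_domain :: "nat \<Rightarrow> 'a::euclidean_space measure set" where
  "arcsine_domain k = {nu. borel_measure_on nu \<and> emeasure nu {0} = 0 \<and>
                           levy_measure (arcsine_transform k nu)}"

end

theory Submission
  imports Defs
begin

text \<open>For \<open>|x| = s > 0\<close> the kernel \<open>a\<^sub>k(\<cdot>; s)\<close> is the arcsine probability density on
  \<open>(0, t)\<close> with \<open>t = s\<^sup>k\<^sup>/\<^sup>2\<close>, so \<open>\<A>\<^sub>k(\<nu>)\<close> integrates \<open>min(1, |y|\<^sup>2)\<close> to \<open>\<integral> m(|x|\<^sup>k\<^sup>/\<^sup>2) \<nu>(dx)\<close>,
  where \<open>m(t)\<close> is the mean of \<open>min(1, r\<^sup>2)\<close> under that law. The law lives on \<open>(0, t)\<close> and puts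
  mass at least \<open>1/\<pi>\<close> on \<open>(t/2, t)\<close>, where \<open>min(1, r\<^sup>2) \<ge> min(1, t\<^sup>2)/4\<close>; hence \<open>m(t)\<close> is
  comparable to \<open>min(1, t\<^sup>2) = min(1, |x|\<^sup>k)\<close>, and \<open>\<A>\<^sub>k(\<nu>)\<close> is a Levy measure exactly when
  \<open>\<integral> min(1, |x|\<^sup>k) \<nu>(dx) < \<infinity>\<close>. For \<open>k = 1\<close> this bound also dominates \<open>\<integral> min(1, |x|\<^sup>2) \<nu>(dx)\<close>.\<close>

definition arcsine_density :: "real \<Rightarrow> real \<Rightarrow> real" where
  "arcsine_density t r = (if 0 < r \<and> r < t then 2 / pi * (t\<^sup>2 - r\<^sup>2) powr (-1/2) else 0)"

lemma arcsine_density_nonneg: "0 \<le> arcsine_density t r"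
  by (simp add: arcsine_density_def)

lemma arcsine_density_nonpos: "t \<le> 0 \<Longrightarrow> arcsine_density t r = 0"
  by (simp add: arcsine_density_def)

lemma borel_measurable_arcsine_density [measurable]: "arcsine_density t \<in> borel_measurable borel"
  unfolding arcsine_density_def by measurable

lemma arcsine_kernel_eq_arcsine_density:
  assumes "k \<in> {1, 2}" "0 \<le> s"
  shows "arcsine_kernel k r s = arcsine_density (sqrt (s ^ k)) r"
  using assms by (auto simp: arcsine_kernel_def arcsine_density_def)

lemma has_integral_inverse_sqrt_diff_squares:
  fixes t :: real
  assumes t: "0 < t"
  shows "((\<lambda>r. (t\<^sup>2 - r\<^sup>2) powr (-1/2)) has_integral pi / 2) {0<..<t}"
proof -
  have "((\<lambda>r. arcsin (r / t)) has_real_derivative (t\<^sup>2 - r\<^sup>2) powr (-1/2)) (at r)"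
    if r: "r \<in> {0<..<t}" for r
  proof -
    have "-1 < r / t" "r / t < 1" using r t by (auto simp: field_simps)
    then have "((\<lambda>r. arcsin (r / t)) has_real_derivative inverse (sqrt (1 - (r / t)\<^sup>2)) * (1 / t)) (at r)"
      by (rule DERIV_chain2[OF DERIV_arcsin]) (use t in \<open>auto intro!: derivative_eq_intros\<close>)
    moreover have "inverse (sqrt (1 - (r / t)\<^sup>2)) * (1 / t) = (t\<^sup>2 - r\<^sup>2) powr (-1/2)"
    proof -
      have "1 - (r / t)\<^sup>2 = (t\<^sup>2 - r\<^sup>2) / t\<^sup>2"
        using t by (simp add: field_simps)
      then have "sqrt (1 - (r / t)\<^sup>2) * t = sqrt (t\<^sup>2 - r\<^sup>2)"
        using t by (simp add: real_sqrt_divide)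
      moreover have "(t\<^sup>2 - r\<^sup>2) powr (-1/2) = inverse (sqrt (t\<^sup>2 - r\<^sup>2))"
        using r t by (simp add: powr_minus powr_half_sqrt power_strict_mono)
      moreover have "inverse (sqrt (1 - (r / t)\<^sup>2)) * (1 / t) = inverse (sqrt (1 - (r / t)\<^sup>2) * t)"
        by (simp add: inverse_mult_distrib divide_inverse)
      ultimately show ?thesis
        by simp
    qed
    ultimately show ?thesis
      by simp
  qed
  moreover have "continuous_on {0..t} (\<lambda>r. arcsin (r / t))"
    using t by (intro continuous_intros) (auto simp: field_simps)
  ultimately have "((\<lambda>r. (t\<^sup>2 - r\<^sup>2) powr (-1/2)) has_integral arcsin (t / t) - arcsin (0 / t)) {0..t}"
    using t by (intro fundamental_theorem_of_calculus_interior)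
      (auto simp: has_real_derivative_iff_has_vector_derivative[symmetric])
  then show ?thesis
    using t by (simp add: has_integral_Icc_iff_Ioo)
qed

lemma nn_integral_arcsine_density:
  assumes "0 < t"
  shows "(\<integral>\<^sup>+ r. ennreal (arcsine_density t r) \<partial>lborel) = 1"
proof -
  have "((\<lambda>r. 2 / pi * (t\<^sup>2 - r\<^sup>2) powr (-1/2)) has_integral 2 / pi * (pi / 2)) {0<..<t}"
    using has_integral_inverse_sqrt_diff_squares[OF assms] by (rule has_integral_mult_right)
  then have "(\<integral>\<^sup>+ r. ennreal (indicator {0<..<t} r * (2 / pi * (t\<^sup>2 - r\<^sup>2) powr (-1/2))) \<partial>lborel)
      = ennreal 1"
    by (intro nn_integral_has_integral_lebesgue) simp_all
  moreover have "arcsine_density t = (\<lambda>r. indicator {0<..<t} r * (2 / pi * (t\<^sup>2 - r\<^sup>2) powr (-1/2)))"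
    by (simp add: arcsine_density_def fun_eq_iff)
  ultimately show ?thesis
    by simp
qed

definition arcsine_truncated_moment :: "real \<Rightarrow> ennreal" where
  "arcsine_truncated_moment t = (\<integral>\<^sup>+ r. ennreal (arcsine_density t r * min 1 (r\<^sup>2)) \<partial>lborel)"

lemma arcsine_truncated_moment_le:
  assumes "0 \<le> t"
  shows "arcsine_truncated_moment t \<le> ennreal (min 1 (t\<^sup>2))"
proof (cases "t = 0")
  case True
  then show ?thesis
    by (simp add: arcsine_truncated_moment_def arcsine_density_nonpos)
next
  case False
  have "arcsine_density t r * min 1 (r\<^sup>2) \<le> min 1 (t\<^sup>2) * arcsine_density t r" for r
  proof (cases "0 < r \<and> r < t")
    case True
    then have "r\<^sup>2 \<le> t\<^sup>2"
      by (simp add: power_mono)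
    then have "min 1 (r\<^sup>2) \<le> min 1 (t\<^sup>2)"
      by linarith
    then show ?thesis
      by (simp add: mult_left_mono arcsine_density_nonneg mult.commute)
  qed (auto simp: arcsine_density_def)
  then have "arcsine_truncated_moment t \<le> (\<integral>\<^sup>+ r. ennreal (min 1 (t\<^sup>2)) * ennreal (arcsine_density t r) \<partial>lborel)"
    unfolding arcsine_truncated_moment_def
    by (intro nn_integral_mono) (simp add: ennreal_mult'[symmetric] ennreal_leI)
  also have "\<dots> = ennreal (min 1 (t\<^sup>2))"
    using assms False by (subst nn_integral_cmult) (simp_all add: nn_integral_arcsine_density)
  finally show ?thesis .
qed

lemma arcsine_truncated_moment_ge:
  assumes "0 \<le> t"
  shows "ennreal (min 1 (t\<^sup>2) / (4 * pi)) \<le> arcsine_truncated_moment t"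
proof (cases "t = 0")
  case False
  with assms have t: "0 < t"
    by simp
  define c where "c = 2 / pi * (1 / t) * (min 1 (t\<^sup>2) / 4)"
  have "c \<le> arcsine_density t r * min 1 (r\<^sup>2)" if r: "t / 2 < r" "r < t" for r
  proof -
    have "0 < t\<^sup>2 - r\<^sup>2"
      using r t by (simp add: power_strict_mono)
    then have "(t\<^sup>2) powr (-1/2) \<le> (t\<^sup>2 - r\<^sup>2) powr (-1/2)"
      by (intro powr_mono2') auto
    moreover have "(t\<^sup>2) powr (-1/2) = 1 / t"
      using t powr_minus[of "t\<^sup>2" "1/2"] by (simp add: powr_half_sqrt inverse_eq_divide)
    moreover have "(t / 2)\<^sup>2 \<le> r\<^sup>2"
      using r t by (intro power_mono) auto
    then have "min 1 (t\<^sup>2) / 4 \<le> min 1 (r\<^sup>2)"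
      by (auto simp: power_divide min_def)
    ultimately have "1 / t * (min 1 (t\<^sup>2) / 4) \<le> (t\<^sup>2 - r\<^sup>2) powr (-1/2) * min 1 (r\<^sup>2)"
      using t by (intro mult_mono) auto
    then have "2 / pi * (1 / t * (min 1 (t\<^sup>2) / 4)) \<le> 2 / pi * ((t\<^sup>2 - r\<^sup>2) powr (-1/2) * min 1 (r\<^sup>2))"
      by (rule mult_left_mono) simp
    then show ?thesis
      using r t by (simp add: c_def arcsine_density_def mult.assoc)
  qed
  then have "(\<integral>\<^sup>+ r. ennreal c * indicator {t/2<..<t} r \<partial>lborel) \<le> arcsine_truncated_moment t"
    unfolding arcsine_truncated_moment_def
    by (intro nn_integral_mono) (simp add: indicator_def ennreal_leI)
  moreover have "(\<integral>\<^sup>+ r. ennreal c * indicator {t/2<..<t} r \<partial>lborel) = ennreal (c * (t / 2))"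
    using t by (simp add: nn_integral_cmult_indicator c_def ennreal_mult[symmetric])
  moreover have "c * (t / 2) = min 1 (t\<^sup>2) / (4 * pi)"
    using t by (simp add: c_def field_simps)
  ultimately show ?thesis
    by simp
qed simp

definition arcsine_weight :: "nat \<Rightarrow> 'a::euclidean_space \<times> real \<Rightarrow> ennreal" where
  "arcsine_weight k = (\<lambda>(x, r). indicator (UNIV - {0}) x * (indicator {0<..} r * ennreal (arcsine_kernel k r (norm x))))"

definition polar_point :: "'a::euclidean_space \<times> real \<Rightarrow> 'a" where
  "polar_point = (\<lambda>(x, r). r *\<^sub>R (x /\<^sub>R norm x))"

lemma borel_measurable_arcsine_weight [measurable]:
  "arcsine_weight k \<in> borel_measurable (borel \<Otimes>\<^sub>M borel)"
  unfolding arcsine_weight_def arcsine_kernel_def split_beta by measurable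

lemma measurable_polar_point [measurable]: "polar_point \<in> borel_measurable (borel \<Otimes>\<^sub>M borel)"
  unfolding polar_point_def split_beta by measurable

lemma norm_polar_point: "x \<noteq> 0 \<Longrightarrow> norm (polar_point (x, r)) = \<bar>r\<bar>"
  by (simp add: polar_point_def norm_sgn flip: sgn_div_norm)

lemma sets_pair_lborel:
  "borel_measure_on nu \<Longrightarrow> sets (nu \<Otimes>\<^sub>M lborel) = sets (borel \<Otimes>\<^sub>M borel)"
  unfolding borel_measure_on_def by (intro sets_pair_measure_cong) simp_all

lemma nn_integral_distr_arcsine_weight:
  fixes nu :: "'a::euclidean_space measure"
  assumes nu: "borel_measure_on nu" and f: "f \<in> borel_measurable borel"
  shows "(\<integral>\<^sup>+ y. f y \<partial>distr (density (nu \<Otimes>\<^sub>M lborel) (arcsine_weight k)) borel polar_point)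
       = (\<integral>\<^sup>+ x. \<integral>\<^sup>+ r. arcsine_weight k (x, r) * f (polar_point (x, r)) \<partial>lborel \<partial>nu)"
proof -
  note measurable_cong_sets[OF sets_pair_lborel[OF nu] refl, measurable_cong]
  have [measurable]: "(\<lambda>z. f (polar_point z)) \<in> borel_measurable (borel \<Otimes>\<^sub>M borel)"
    using measurable_polar_point f by (rule measurable_compose)
  have "(\<integral>\<^sup>+ y. f y \<partial>distr (density (nu \<Otimes>\<^sub>M lborel) (arcsine_weight k)) borel polar_point)
      = (\<integral>\<^sup>+ z. arcsine_weight k z * f (polar_point z) \<partial>(nu \<Otimes>\<^sub>M lborel))"
    using f by (simp add: nn_integral_distr nn_integral_density)
  also have "\<dots> = (\<integral>\<^sup>+ x. \<integral>\<^sup>+ r. arcsine_weight k (x, r) * f (polar_point (x, r)) \<partial>lborel \<partial>nu)"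
    by (intro lborel.nn_integral_fst[symmetric]) measurable
  finally show ?thesis .
qed

lemma arcsine_transform_eq_distr:
  fixes nu :: "'a::euclidean_space measure"
  assumes nu: "borel_measure_on nu"
  shows "arcsine_transform k nu = distr (density (nu \<Otimes>\<^sub>M lborel) (arcsine_weight k)) borel polar_point"
    (is "_ = ?M")
proof -
  have "emeasure ?M B = (\<integral>\<^sup>+ x. indicator (UNIV - {0}) x *
          (\<integral>\<^sup>+ r. indicator {0<..} r * ennreal (arcsine_kernel k r (norm x))
                * indicator B (r *\<^sub>R (x /\<^sub>R norm x)) \<partial>lborel) \<partial>nu)"
    if B: "B \<in> sets borel" for B
  proof -
    have "emeasure ?M B = (\<integral>\<^sup>+ y. indicator B y \<partial>?M)"
      using B by simp
    also have "\<dots> = (\<integral>\<^sup>+ x. \<integral>\<^sup>+ r. arcsine_weight k (x, r) * indicator B (polar_point (x, r)) \<partial>lborel \<partial>nu)"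
      using nu B by (intro nn_integral_distr_arcsine_weight) simp_all
    also have "\<dots> = (\<integral>\<^sup>+ x. indicator (UNIV - {0}) x *
          (\<integral>\<^sup>+ r. indicator {0<..} r * ennreal (arcsine_kernel k r (norm x))
                * indicator B (r *\<^sub>R (x /\<^sub>R norm x)) \<partial>lborel) \<partial>nu)"
    proof (rule nn_integral_cong)
      fix x :: 'a
      show "(\<integral>\<^sup>+ r. arcsine_weight k (x, r) * indicator B (polar_point (x, r)) \<partial>lborel)
          = indicator (UNIV - {0}) x * (\<integral>\<^sup>+ r. indicator {0<..} r * ennreal (arcsine_kernel k r (norm x))
                * indicator B (r *\<^sub>R (x /\<^sub>R norm x)) \<partial>lborel)"
        by (cases "x = 0") (simp_all add: arcsine_weight_def polar_point_def mult.assoc)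
    qed
    finally show ?thesis .
  qed
  then have "arcsine_transform k nu = measure_of UNIV (sets borel) (emeasure ?M)"
    unfolding arcsine_transform_def
    by (intro measure_of_eq) (auto simp: sets.sigma_sets_eq[of borel, simplified])
  also have "\<dots> = ?M"
    using measure_of_of_measure[of ?M] by simp
  finally show ?thesis .
qed

lemma nn_integral_arcsine_transform:
  fixes nu :: "'a::euclidean_space measure"
  assumes "borel_measure_on nu" and "f \<in> borel_measurable borel"
  shows "(\<integral>\<^sup>+ y. f y \<partial>arcsine_transform k nu)
       = (\<integral>\<^sup>+ x. \<integral>\<^sup>+ r. arcsine_weight k (x, r) * f (polar_point (x, r)) \<partial>lborel \<partial>nu)"
  using assms by (simp add: arcsine_transform_eq_distr nn_integral_distr_arcsine_weight)

lemma sets_arcsine_transform: "borel_measure_on nu \<Longrightarrow> sets (arcsine_transform k nu) = sets borel"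
  by (simp add: arcsine_transform_eq_distr)

lemma emeasure_arcsine_transform_origin:
  fixes nu :: "'a::euclidean_space measure"
  assumes nu: "borel_measure_on nu"
  shows "emeasure (arcsine_transform k nu) {0} = 0"
proof -
  have vanishes: "arcsine_weight k (x, r) * indicator {0} (polar_point (x, r)) = 0" for x :: 'a and r
  proof (cases "x = 0 \<or> r \<le> 0")
    case False
    then have "polar_point (x, r) \<noteq> 0"
      using norm_polar_point[of x r] by auto
    then show ?thesis
      by simp
  qed (auto simp: arcsine_weight_def)
  have "emeasure (arcsine_transform k nu) {0} = (\<integral>\<^sup>+ y. indicator {0} y \<partial>arcsine_transform k nu)"
    by (simp add: sets_arcsine_transform[OF nu])
  also have "\<dots> = (\<integral>\<^sup>+ x. \<integral>\<^sup>+ r. arcsine_weight k (x, r) * indicator {0} (polar_point (x, r)) \<partial>lborel \<partial>nu)"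
    using nu by (rule nn_integral_arcsine_transform) simp
  also have "\<dots> = 0"
    by (simp only: vanishes) simp
  finally show ?thesis .
qed

lemma nn_integral_truncated_square_arcsine_transform:
  fixes nu :: "'a::euclidean_space measure"
  assumes nu: "borel_measure_on nu" and k: "k \<in> {1, 2}"
  shows "(\<integral>\<^sup>+ y. ennreal (min 1 (norm y ^ 2)) \<partial>arcsine_transform k nu)
       = (\<integral>\<^sup>+ x. arcsine_truncated_moment (sqrt (norm x ^ k)) \<partial>nu)"
proof -
  have "(\<integral>\<^sup>+ r. arcsine_weight k (x, r) * ennreal (min 1 (norm (polar_point (x, r)) ^ 2)) \<partial>lborel)
      = arcsine_truncated_moment (sqrt (norm x ^ k))" for x :: 'a
  proof (cases "x = 0")
    case True
    with k show ?thesis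
      by (auto simp: arcsine_weight_def arcsine_truncated_moment_def arcsine_density_nonpos)
  next
    case False
    then show ?thesis
      unfolding arcsine_truncated_moment_def
      using k by (intro nn_integral_cong)
        (auto simp: arcsine_weight_def norm_polar_point arcsine_kernel_eq_arcsine_density
          arcsine_density_def ennreal_mult' indicator_def)
  qed
  then show ?thesis
    using nu by (simp add: nn_integral_arcsine_transform)
qed

lemma nn_integral_finite_iff_comparable:
  assumes h: "h \<in> borel_measurable M" and c: "0 < c"
    and lower: "\<And>x. x \<in> space M \<Longrightarrow> ennreal c * h x \<le> g x"
    and upper: "\<And>x. x \<in> space M \<Longrightarrow> g x \<le> h x"
  shows "(\<integral>\<^sup>+ x. g x \<partial>M) < \<infinity> \<longleftrightarrow> (\<integral>\<^sup>+ x. h x \<partial>M) < \<infinity>"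
proof
  assume g_finite: "(\<integral>\<^sup>+ x. g x \<partial>M) < \<infinity>"
  have "ennreal c * (\<integral>\<^sup>+ x. h x \<partial>M) = (\<integral>\<^sup>+ x. ennreal c * h x \<partial>M)"
    using h by (rule nn_integral_cmult[symmetric])
  also have "\<dots> \<le> (\<integral>\<^sup>+ x. g x \<partial>M)"
    using lower by (rule nn_integral_mono)
  finally have "ennreal c * (\<integral>\<^sup>+ x. h x \<partial>M) < \<infinity>"
    using g_finite by (rule le_less_trans)
  then show "(\<integral>\<^sup>+ x. h x \<partial>M) < \<infinity>"
    using c by (auto simp: ennreal_mult_less_top top.not_eq_extremum)
next
  assume "(\<integral>\<^sup>+ x. h x \<partial>M) < \<infinity>"
  moreover have "(\<integral>\<^sup>+ x. g x \<partial>M) \<le> (\<integral>\<^sup>+ x. h x \<partial>M)"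
    using upper by (rule nn_integral_mono)
  ultimately show "(\<integral>\<^sup>+ x. g x \<partial>M) < \<infinity>"
    by (rule le_less_trans[rotated])
qed

lemma min_one_power_decreasing:
  fixes a :: real
  assumes "0 \<le> a" "m \<le> n"
  shows "min 1 (a ^ n) \<le> min 1 (a ^ m)"
proof (cases "a \<le> 1")
  case True
  then show ?thesis
    using assms power_decreasing[of m n a] by linarith
next
  case False
  then show ?thesis
    by simp
qed

lemma levy_integral_arcsine_transform_finite_iff:
  fixes nu :: "'a::euclidean_space measure"
  assumes nu: "borel_measure_on nu" and k: "k \<in> {1, 2}"
  shows "(\<integral>\<^sup>+ y. ennreal (min 1 (norm y ^ 2)) \<partial>arcsine_transform k nu) < \<infinity>
     \<longleftrightarrow> (\<integral>\<^sup>+ x. ennreal (min 1 (norm x ^ k)) \<partial>nu) < \<infinity>"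
  unfolding nn_integral_truncated_square_arcsine_transform[OF nu k]
proof (rule nn_integral_finite_iff_comparable)
  have "(\<lambda>x::'a. ennreal (min 1 (norm x ^ k))) \<in> borel_measurable borel"
    by measurable
  then show "(\<lambda>x. ennreal (min 1 (norm x ^ k))) \<in> borel_measurable nu"
    using nu measurable_cong_sets unfolding borel_measure_on_def by blast
  fix x :: 'a
  have t: "0 \<le> sqrt (norm x ^ k)" "(sqrt (norm x ^ k))\<^sup>2 = norm x ^ k"
    by simp_all
  have "ennreal (1 / (4 * pi)) * ennreal (min 1 (norm x ^ k)) = ennreal (min 1 (norm x ^ k) / (4 * pi))"
    by (subst ennreal_mult'[symmetric]) auto
  then show "ennreal (1 / (4 * pi)) * ennreal (min 1 (norm x ^ k)) \<le> arcsine_truncated_moment (sqrt (norm x ^ k))"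
    using arcsine_truncated_moment_ge[OF t(1)] t(2) by simp
  show "arcsine_truncated_moment (sqrt (norm x ^ k)) \<le> ennreal (min 1 (norm x ^ k))"
    using arcsine_truncated_moment_le[OF t(1)] t(2) by simp
qed simp

theorem theorem2p2:
  assumes "k \<in> {1, 2::nat}"
  shows "(arcsine_domain k :: 'a::euclidean_space measure set) = levy_class k"
proof (intro set_eqI iffI)
  fix nu :: "'a measure"
  assume "nu \<in> arcsine_domain k"
  then have nu: "borel_measure_on nu" "emeasure nu {0} = 0"
    and "(\<integral>\<^sup>+ y. ennreal (min 1 (norm y ^ 2)) \<partial>arcsine_transform k nu) < \<infinity>"
    by (auto simp: arcsine_domain_def levy_measure_def)
  then have k_finite: "(\<integral>\<^sup>+ x. ennreal (min 1 (norm x ^ k)) \<partial>nu) < \<infinity>"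
    using levy_integral_arcsine_transform_finite_iff[OF nu(1) assms] by simp
  have "(\<integral>\<^sup>+ x. ennreal (min 1 (norm x ^ 2)) \<partial>nu) \<le> (\<integral>\<^sup>+ x. ennreal (min 1 (norm x ^ k)) \<partial>nu)"
    using assms by (intro nn_integral_mono ennreal_leI min_one_power_decreasing) auto
  with k_finite show "nu \<in> levy_class k"
    using nu by (auto simp: levy_class_def levy_measure_def)
next
  fix nu :: "'a measure"
  assume "nu \<in> levy_class k"
  then have nu: "borel_measure_on nu" "emeasure nu {0} = 0"
    and "(\<integral>\<^sup>+ x. ennreal (min 1 (norm x ^ k)) \<partial>nu) < \<infinity>"
    by (auto simp: levy_class_def levy_measure_def)
  then show "nu \<in> arcsine_domain k"
    using levy_integral_arcsine_transform_finite_iff[OF nu(1) assms]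
    by (simp add: arcsine_domain_def levy_measure_def borel_measure_on_def
        sets_arcsine_transform emeasure_arcsine_transform_origin)
qed

end
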